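(* Let $I$ be a 1-absorbing primary hyperideal of $R$ that is not a primary hyperideal of $R$. Then $R$ is a local multiplicative hyperring.
   Context: Throughout, $R$ is a commutative multiplicative hyperring ($(R,+)$ abelian group, $\circ$ a commutative associative hyperoperation into nonempty subsets, $a\circ(b+c)\subseteq a\circ b+a\circ c$, $a\circ(-b)=(-a)\circ b=-(a\circ b)$; $A\circ B=\bigcup a\circ b$), with identity $1$ ($a\in a\circ 1$); $x$ is a unit if $1\in x\circ y$ for some $y$. All hyperideals are $\mathbf{C}$-hyperideals (for any finite product $A=r_1\circ\cdots\circ r_n$, $A\cap I\neq\emptyset\Rightarrow A\subseteq I$). $\sqrt I=\{r:r^n\subseteq I\text{ for some }n\}$. Primary hyperideal: nonzero proper $Q$ with $x\circ y\subseteq Q\Rightarrow x\in Q$ or $y\in\sqrt Q$. 1-absorbing primary hyperideal: proper $I$ such that for all nonunit $x,y,z$, $x\circ y\circ z\subseteq I$ implies $x\circ y\subseteq I$ or $z\in\sqrt I$. $R$ is local if it has a unique maximal hyperideal. *)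

theory Defs
  imports Main
begin

text \<open>A commutative multiplicative hyperring: the carrier is the whole type 'a,
  (R,+) is the abelian group structure of the type class ab_group_add, and
  M :: 'a => 'a => 'a set is the hyperoperation.\<close>

definition hset_mult :: "('a \<Rightarrow> 'a \<Rightarrow> 'a set) \<Rightarrow> 'a set \<Rightarrow> 'a set \<Rightarrow> 'a set" where
  "hset_mult M A B = (\<Union>a\<in>A. \<Union>b\<in>B. M a b)"

definition hset_plus :: "'a::ab_group_add set \<Rightarrow> 'a set \<Rightarrow> 'a set" where
  "hset_plus A B = {a + b | a b. a \<in> A \<and> b \<in> B}"

definition comm_mult_hyperring :: "('a::ab_group_add \<Rightarrow> 'a \<Rightarrow> 'a set) \<Rightarrow> bool" where
  "comm_mult_hyperring M \<longleftrightarrow>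
     (\<forall>a b. M a b \<noteq> {}) \<and>
     (\<forall>a b. M a b = M b a) \<and>
     (\<forall>a b c. hset_mult M (M a b) {c} = hset_mult M {a} (M b c)) \<and>
     (\<forall>a b c. M a (b + c) \<subseteq> hset_plus (M a b) (M a c)) \<and>
     (\<forall>a b. M a (- b) = uminus ` M a b \<and> M (- a) b = uminus ` M a b)"

definition hyperring_identity :: "('a \<Rightarrow> 'a \<Rightarrow> 'a set) \<Rightarrow> 'a \<Rightarrow> bool" where
  "hyperring_identity M e \<longleftrightarrow> (\<forall>a. a \<in> M a e)"

definition hunit :: "('a \<Rightarrow> 'a \<Rightarrow> 'a set) \<Rightarrow> 'a \<Rightarrow> 'a \<Rightarrow> bool" where
  "hunit M e x \<longleftrightarrow> (\<exists>y. e \<in> M x y)"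

fun hprod :: "('a \<Rightarrow> 'a \<Rightarrow> 'a set) \<Rightarrow> 'a list \<Rightarrow> 'a set" where
  "hprod M [] = {}"
| "hprod M [r] = {r}"
| "hprod M (r # rs) = hset_mult M {r} (hprod M rs)"

definition hpow :: "('a \<Rightarrow> 'a \<Rightarrow> 'a set) \<Rightarrow> 'a \<Rightarrow> nat \<Rightarrow> 'a set" where
  "hpow M r n = hprod M (replicate n r)"

definition hyperideal :: "('a::ab_group_add \<Rightarrow> 'a \<Rightarrow> 'a set) \<Rightarrow> 'a set \<Rightarrow> bool" where
  "hyperideal M I \<longleftrightarrow> I \<noteq> {} \<and> (\<forall>a\<in>I. \<forall>b\<in>I. a - b \<in> I) \<and> (\<forall>r. \<forall>a\<in>I. M r a \<subseteq> I)"

definition C_hyperideal :: "('a::ab_group_add \<Rightarrow> 'a \<Rightarrow> 'a set) \<Rightarrow> 'a set \<Rightarrow> bool" where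
  "C_hyperideal M I \<longleftrightarrow> hyperideal M I \<and>
     (\<forall>rs. rs \<noteq> [] \<longrightarrow> hprod M rs \<inter> I \<noteq> {} \<longrightarrow> hprod M rs \<subseteq> I)"

definition hradical :: "('a \<Rightarrow> 'a \<Rightarrow> 'a set) \<Rightarrow> 'a set \<Rightarrow> 'a set" where
  "hradical M I = {r. \<exists>n\<ge>1. hpow M r n \<subseteq> I}"

definition primary_hyperideal :: "('a::ab_group_add \<Rightarrow> 'a \<Rightarrow> 'a set) \<Rightarrow> 'a set \<Rightarrow> bool" where
  "primary_hyperideal M Q \<longleftrightarrow> hyperideal M Q \<and> Q \<noteq> {0} \<and> Q \<noteq> UNIV \<and>
     (\<forall>x y. M x y \<subseteq> Q \<longrightarrow> x \<in> Q \<or> y \<in> hradical M Q)"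

definition one_absorbing_primary_hyperideal ::
  "('a::ab_group_add \<Rightarrow> 'a \<Rightarrow> 'a set) \<Rightarrow> 'a \<Rightarrow> 'a set \<Rightarrow> bool" where
  "one_absorbing_primary_hyperideal M e I \<longleftrightarrow> hyperideal M I \<and> I \<noteq> UNIV \<and>
     (\<forall>x y z. \<not> hunit M e x \<longrightarrow> \<not> hunit M e y \<longrightarrow> \<not> hunit M e z \<longrightarrow>
        hprod M [x, y, z] \<subseteq> I \<longrightarrow> hprod M [x, y] \<subseteq> I \<or> z \<in> hradical M I)"

definition maximal_hyperideal :: "('a::ab_group_add \<Rightarrow> 'a \<Rightarrow> 'a set) \<Rightarrow> 'a set \<Rightarrow> bool" where
  "maximal_hyperideal M P \<longleftrightarrow> hyperideal M P \<and> P \<noteq> UNIV \<and>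
     (\<forall>J. hyperideal M J \<longrightarrow> P \<subseteq> J \<longrightarrow> J = P \<or> J = UNIV)"

definition local_hyperring :: "('a::ab_group_add \<Rightarrow> 'a \<Rightarrow> 'a set) \<Rightarrow> bool" where
  "local_hyperring M \<longleftrightarrow> (\<exists>!P. maximal_hyperideal M P)"

end

theory Submission
  imports Defs
begin

text \<open>If I is 1-absorbing primary but not primary, pick x, y with x y \<subseteq> I, x \<notin> I and
  y \<notin> \<surd>I; both are nonunits. For every nonunit c the product c x y lies in I, so the
  1-absorbing property gives c x \<subseteq> I. Hence if c and d are nonunits then
  x (c + d) \<subseteq> x c + x d \<subseteq> I, and c + d cannot be a unit since otherwise x \<in> I.
  So the nonunits form a proper hyperideal, which then contains every proper hyperideal
  and is therefore the unique maximal one.\<close>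

lemma comm_mult_hyperringD:
  assumes "comm_mult_hyperring M"
  shows hmult_commute: "M a b = M b a"
    and hmult_assoc: "hset_mult M (M a b) {c} = hset_mult M {a} (M b c)"
    and hmult_distrib: "M a (b + c) \<subseteq> hset_plus (M a b) (M a c)"
    and hmult_uminus_right: "M a (- b) = uminus ` M a b"
    and hmult_uminus_left: "M (- a) b = uminus ` M a b"
  using assms unfolding comm_mult_hyperring_def by simp_all

lemma hmult_reassoc_right:
  assumes "comm_mult_hyperring M" "z \<in> M a b" "w \<in> M z c"
  shows "\<exists>t\<in>M b c. w \<in> M a t"
proof -
  have "w \<in> hset_mult M (M a b) {c}"
    using assms(2,3) unfolding hset_mult_def by blast
  then show ?thesis
    using hmult_assoc[OF assms(1), of a b c] unfolding hset_mult_def by blast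
qed

lemma hmult_reassoc_left:
  assumes "comm_mult_hyperring M" "t \<in> M b c" "w \<in> M a t"
  shows "\<exists>z\<in>M a b. w \<in> M z c"
proof -
  have "w \<in> hset_mult M {a} (M b c)"
    using assms(2,3) unfolding hset_mult_def by blast
  then show ?thesis
    using hmult_assoc[OF assms(1), of a b c] unfolding hset_mult_def by blast
qed

lemma hyperideal_zero: "hyperideal M I \<Longrightarrow> 0 \<in> I"
  unfolding hyperideal_def by (metis all_not_in_conv diff_self)

lemma hyperideal_uminus: "hyperideal M I \<Longrightarrow> a \<in> I \<Longrightarrow> - a \<in> I"
  using hyperideal_zero unfolding hyperideal_def by (metis diff_0)

lemma hyperideal_add: "hyperideal M I \<Longrightarrow> a \<in> I \<Longrightarrow> b \<in> I \<Longrightarrow> a + b \<in> I"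
  using hyperideal_uminus unfolding hyperideal_def by (metis diff_minus_eq_add)

lemma hyperideal_hmult_left: "hyperideal M I \<Longrightarrow> a \<in> I \<Longrightarrow> M r a \<subseteq> I"
  unfolding hyperideal_def by blast

lemma hyperideal_hmult_right:
  "comm_mult_hyperring M \<Longrightarrow> hyperideal M I \<Longrightarrow> a \<in> I \<Longrightarrow> M a r \<subseteq> I"
  using hyperideal_hmult_left[of M I a r] by (simp add: hmult_commute)

lemma hyperideal_hmult_distrib:
  assumes "comm_mult_hyperring M" "hyperideal M I" "M a b \<subseteq> I" "M a c \<subseteq> I"
  shows "M a (b + c) \<subseteq> I"
  using hmult_distrib[OF assms(1), of a b c] assms(3,4) hyperideal_add[OF assms(2)]
  unfolding hset_plus_def by blast

lemma subset_hradical: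
  "I \<subseteq> hradical M I"
  unfolding hradical_def hpow_def by force

lemma hunit_identity: "hyperring_identity M e \<Longrightarrow> hunit M e e"
  unfolding hunit_def hyperring_identity_def by blast

lemma hunit_uminus:
  assumes "comm_mult_hyperring M" "hunit M e (- a)"
  shows "hunit M e a"
proof -
  obtain y where "e \<in> M (- a) y" using assms(2) unfolding hunit_def by blast
  then have "e \<in> M a (- y)"
    by (simp add: hmult_uminus_left[OF assms(1)] hmult_uminus_right[OF assms(1)])
  then show ?thesis unfolding hunit_def by blast
qed

lemma hunit_hmult_factor:
  assumes "comm_mult_hyperring M" "z \<in> M r a" "hunit M e z"
  shows "hunit M e a"
proof -
  obtain y where "e \<in> M z y" using assms(3) unfolding hunit_def by blast
  moreover have "z \<in> M a r" using assms(2) hmult_commute[OF assms(1), of r a] by simp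
  ultimately show ?thesis
    using hmult_reassoc_right[OF assms(1)] unfolding hunit_def by blast
qed

lemma hyperideal_UNIV_if_hunit:
  assumes "comm_mult_hyperring M" "hyperring_identity M e" "hyperideal M J" "u \<in> J"
    "hunit M e u"
  shows "J = UNIV"
proof -
  obtain v where "e \<in> M u v" using assms(5) unfolding hunit_def by blast
  then have "e \<in> J" using hyperideal_hmult_right[OF assms(1,3,4)] by blast
  then show ?thesis
    using assms(2) hyperideal_hmult_left[OF assms(3)] unfolding hyperring_identity_def by blast
qed

text \<open>With e \<in> y w: x \<in> x e \<subseteq> x (y w) = (x y) w \<subseteq> I.\<close>

lemma hyperideal_mem_if_hmult_hunit:
  assumes "comm_mult_hyperring M" "hyperring_identity M e" "hyperideal M I"
    "M x y \<subseteq> I" "hunit M e y"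
  shows "x \<in> I"
proof -
  obtain w where "e \<in> M y w" using assms(5) unfolding hunit_def by blast
  moreover have "x \<in> M x e" using assms(2) unfolding hyperring_identity_def by blast
  ultimately obtain z where "z \<in> M x y" "x \<in> M z w"
    using hmult_reassoc_left[OF assms(1)] by blast
  then show ?thesis using hyperideal_hmult_right[OF assms(1,3)] assms(4) by blast
qed

lemma hyperideal_nonunits:
  assumes "comm_mult_hyperring M" "\<not> hunit M e x"
    and add_closed: "\<And>c d. \<not> hunit M e c \<Longrightarrow> \<not> hunit M e d \<Longrightarrow> \<not> hunit M e (c + d)"
  shows "hyperideal M {a. \<not> hunit M e a}"
  unfolding hyperideal_def
proof (intro conjI ballI allI)
  show "{a. \<not> hunit M e a} \<noteq> {}" using assms(2) by blast
next
  fix a b assume "a \<in> {a. \<not> hunit M e a}" "b \<in> {a. \<not> hunit M e a}"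
  then have "\<not> hunit M e (a + - b)"
    using add_closed hunit_uminus[OF assms(1)] by blast
  then show "a - b \<in> {a. \<not> hunit M e a}" by simp
next
  fix r a assume "a \<in> {a. \<not> hunit M e a}"
  then show "M r a \<subseteq> {a. \<not> hunit M e a}"
    using hunit_hmult_factor[OF assms(1)] by blast
qed

lemma local_hyperring_if_hyperideal_nonunits:
  assumes "comm_mult_hyperring M" "hyperring_identity M e"
    "hyperideal M {a. \<not> hunit M e a}"
  shows "local_hyperring M"
proof -
  let ?N = "{a. \<not> hunit M e a}"
  have proper_le_N: "J \<subseteq> ?N" if "hyperideal M J" "J \<noteq> UNIV" for J
    using hyperideal_UNIV_if_hunit[OF assms(1,2) that(1)] that(2) by blast
  have N_proper: "?N \<noteq> UNIV" using hunit_identity[OF assms(2)] by blast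
  have "maximal_hyperideal M ?N"
    unfolding maximal_hyperideal_def using assms(3) N_proper proper_le_N by blast
  moreover have "P = ?N" if "maximal_hyperideal M P" for P
    using that assms(3) N_proper proper_le_N unfolding maximal_hyperideal_def by blast
  ultimately show ?thesis unfolding local_hyperring_def by blast
qed

lemma one_absorbing_primary_hmult_nonunit:
  assumes "comm_mult_hyperring M" "one_absorbing_primary_hyperideal M e I"
    "M x y \<subseteq> I" "y \<notin> hradical M I"
    "\<not> hunit M e c" "\<not> hunit M e x" "\<not> hunit M e y"
  shows "M c x \<subseteq> I"
proof -
  have "hyperideal M I"
    using assms(2) unfolding one_absorbing_primary_hyperideal_def by blast
  then have "hprod M [c, x, y] \<subseteq> I"
    using assms(3) hyperideal_hmult_left by (force simp: hset_mult_def)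
  then have "hprod M [c, x] \<subseteq> I"
    using assms(2,4-7) unfolding one_absorbing_primary_hyperideal_def by blast
  then show ?thesis by (simp add: hset_mult_def)
qed

lemma nonunits_add_closed_if_annihilated:
  assumes "comm_mult_hyperring M" "hyperring_identity M e" "hyperideal M I" "x \<notin> I"
    and annihilates: "\<And>c. \<not> hunit M e c \<Longrightarrow> M x c \<subseteq> I"
    and "\<not> hunit M e c" "\<not> hunit M e d"
  shows "\<not> hunit M e (c + d)"
  using hyperideal_mem_if_hmult_hunit[OF assms(1-3)] hyperideal_hmult_distrib[OF assms(1,3)]
    annihilates assms(4,6,7) by blast

theorem mainTheorem6:
  fixes M :: "'a::ab_group_add \<Rightarrow> 'a \<Rightarrow> 'a set" and e :: 'a and I :: "'a set"
  assumes "comm_mult_hyperring M"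
    and "hyperring_identity M e"
    and "\<forall>J. hyperideal M J \<longrightarrow> C_hyperideal M J"
    and "one_absorbing_primary_hyperideal M e I"
    and "I \<noteq> {0}"
    and "\<not> primary_hyperideal M I"
  shows "local_hyperring M"
proof -
  have I: "hyperideal M I" "I \<noteq> UNIV"
    using assms(4) unfolding one_absorbing_primary_hyperideal_def by auto
  then obtain x y where xy: "M x y \<subseteq> I" and "x \<notin> I" and y: "y \<notin> hradical M I"
    using assms(5,6) unfolding primary_hyperideal_def by blast
  have "y \<notin> I" using y subset_hradical[of I M] by blast
  have yx: "M y x \<subseteq> I" using xy by (simp only: hmult_commute[OF assms(1), of y x])
  have nonunit_x: "\<not> hunit M e x"
    using hyperideal_mem_if_hmult_hunit[OF assms(1,2) I(1) yx] \<open>y \<notin> I\<close> by blast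
  have nonunit_y: "\<not> hunit M e y"
    using hyperideal_mem_if_hmult_hunit[OF assms(1,2) I(1) xy] \<open>x \<notin> I\<close> by blast
  have annihilates: "M x c \<subseteq> I" if "\<not> hunit M e c" for c
    using one_absorbing_primary_hmult_nonunit[OF assms(1,4) xy y that nonunit_x nonunit_y]
    by (simp add: hmult_commute[OF assms(1), of c x])
  have "hyperideal M {a. \<not> hunit M e a}"
    by (rule hyperideal_nonunits[OF assms(1) nonunit_x nonunits_add_closed_if_annihilated
          [OF assms(1,2) I(1) \<open>x \<notin> I\<close> annihilates]])
  then show ?thesis by (rule local_hyperring_if_hyperideal_nonunits[OF assms(1,2)])
qed

end
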